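(* For each $s=1,2,\dots$, let $B_s$ be the set of indices selected at exploration round $s$ and $\mathbf{q}_s$ the associated probability vector. Then $$\forall i\in[d],\quad\mathbb{P}[i\in B_s]=\frac{d-k}{d-1}q_{s,i}+\frac{k-1}{d-1},$$ $$\forall i\ne j\in[d],\quad\mathbb{P}[i,j\in B_s]=\frac1{g_{d,k}}+\frac{d-k}{(k-2)g_{d,k}}(q_{s,i}+q_{s,j}),$$ $$\forall\text{ pairwise distinct }i,j,r\in[d],\quad\mathbb{P}[i,j,r\in B_s]=\frac1{g_{d,k}}\cdot\frac{k-3}{d-3}+\frac1{g_{d,k}}\cdot\frac{d-k}{d-3}(q_{s,i}+q_{s,j}+q_{s,r}).$$ Moreover, $\mathbb{E}_s[\hat{\mathbf{x}}_{s^2}]=\mathbf{x}_{s^2}$ and $\mathbb{E}_s[\mathbf{h}_{s^2}]=\mathbf{x}_{s^2}\mathbf{x}_{s^2}^\top$, where $\mathbb{E}_s[\cdot]=\mathbb{E}[\cdot\mid B_1,\dots,B_{s-1}]$ is taken with respect to $B_s$.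
   Context: Integers $3\le k\le d-3$, $[d]=\{1,\dots,d\}$, $g_{d,k}=\frac{(d-1)(d-2)}{(k-1)(k-2)}$. SAMPLING$(k,d,\mathbf{w})$ for nonzero $\mathbf{w}\in\mathbb{R}^d$: with $q_i=|w_i|/\|\mathbf{w}\|_1$, draw $I_1\in[d]$ with $\mathbb{P}(I_1=i)=q_i$, then $k-1$ distinct indices uniformly without replacement from $[d]\setminus\{I_1\}$; output the $k$-set $B$. At exploration round $s$ a nonzero vector $\hat{\mathbf{w}}_{s-1}\in\mathbb{R}^d$ determined by $B_1,\dots,B_{s-1}$ is given ($\hat{\mathbf{w}}_0=\frac1d\mathbf{1}_d$), $q_{s,i}=|\hat w_{s-1,i}|/\|\hat{\mathbf{w}}_{s-1}\|_1$ and $B_s=$SAMPLING$(k,d,\hat{\mathbf{w}}_{s-1})$; all probabilities are over $B_s$ conditional on $B_1,\dots,B_{s-1}$. An instance $\mathbf{x}_{s^2}\in\mathbb{R}^d$ (fixed given the past) is observed on $B_s$ and $\hat x_{s^2,i}=\frac{x_{s^2,i}}{\mathbb{P}[i\in B_s]}\mathbb{I}_{i\in B_s}$, $h_{s^2}[i,i]=\frac{x_{s^2,i}^2}{\mathbb{P}[i\in B_s]}\mathbb{I}_{i\in B_s}$, $h_{s^2}[i,j]=\frac{x_{s^2,i}x_{s^2,j}}{\mathbb{P}[i,j\in B_s]}\mathbb{I}_{i,j\in B_s}$ for $i\ne j$. *)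

theory Defs
  imports "HOL-Probability.Probability"
begin

(* Vectors in R^d are modelled as functions nat => real; only indices in {1..d} matter. *)

definition qprob :: "nat \<Rightarrow> (nat \<Rightarrow> real) \<Rightarrow> nat \<Rightarrow> real" where
  "qprob d w i = (if i \<in> {1..d} then \<bar>w i\<bar> / (\<Sum>j\<in>{1..d}. \<bar>w j\<bar>) else 0)"

definition gdk :: "nat \<Rightarrow> nat \<Rightarrow> real" where
  "gdk d k = ((real d - 1) * (real d - 2)) / ((real k - 1) * (real k - 2))"

definition sampling :: "nat \<Rightarrow> nat \<Rightarrow> (nat \<Rightarrow> real) \<Rightarrow> nat set pmf" where
  "sampling k d w =
     bind_pmf (embed_pmf (qprob d w))
       (\<lambda>i. map_pmf (insert i)
              (pmf_of_set {S. S \<subseteq> {1..d} - {i} \<and> card S = k - 1}))"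

definition xhat :: "nat set pmf \<Rightarrow> (nat \<Rightarrow> real) \<Rightarrow> nat set \<Rightarrow> nat \<Rightarrow> real" where
  "xhat P x B i = (if i \<in> B then x i / measure_pmf.prob P {C. i \<in> C} else 0)"

definition hmat :: "nat set pmf \<Rightarrow> (nat \<Rightarrow> real) \<Rightarrow> nat set \<Rightarrow> nat \<Rightarrow> nat \<Rightarrow> real" where
  "hmat P x B i j =
     (if i = j then (if i \<in> B then x i ^ 2 / measure_pmf.prob P {C. i \<in> C} else 0)
      else (if i \<in> B \<and> j \<in> B then x i * x j / measure_pmf.prob P {C. i \<in> C \<and> j \<in> C} else 0))"

end

theory Submission
  imports Defs
begin

(* Conditionally on the first draw I_1 = l, the sample is {l} together with a uniform
   (k-1)-subset of [d] - {l}, which contains a fixed t-set with probability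
   rho t = C(k-1, t) / C(d-1, t).  Hence a set T \<subseteq> [d] lies in B with probability
   rho (|T| - 1) if l \<in> T and rho |T| otherwise, and averaging over l gives
   P[T \<subseteq> B] = q(T) rho (|T| - 1) + (1 - q(T)) rho |T|; the three displayed formulas are
   the cases |T| = 1, 2, 3.  Unbiasedness of the estimators is E[1_A / P(A)] = 1, which only
   needs the inclusion probabilities to be positive, and they are because |T| < k. *)

definition incl_prob :: "nat \<Rightarrow> nat \<Rightarrow> nat \<Rightarrow> real" where
  "incl_prob n m t = real (m choose t) / real (n choose t)"

lemma incl_prob_eq_prod:
  assumes "m \<le> n"
  shows "incl_prob n m t = (\<Prod>i<t. (real m - real i) / (real n - real i))"
proof (cases "t \<le> m")
  case True
  have "incl_prob n m t = (\<Prod>i<t. real (m - i) / real (t - i)) / (\<Prod>i<t. real (n - i) / real (t - i))"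
    unfolding incl_prob_def using True assms by (simp add: binomial_altdef_of_nat atLeast0LessThan)
  also have "\<dots> = (\<Prod>i<t. real (m - i) / real (n - i))"
    using True assms by (simp add: prod_dividef[symmetric])
  also have "\<dots> = (\<Prod>i<t. (real m - real i) / (real n - real i))"
    using True assms by (intro prod.cong) (auto simp: of_nat_diff)
  finally show ?thesis .
next
  case False
  then have vanishing: "(\<Prod>i<t. (real m - real i) / (real n - real i)) = 0"
    by (intro prod_zero) (auto intro!: bexI[of _ m])
  show ?thesis unfolding incl_prob_def vanishing using False by simp
qed

lemma incl_prob_pos: "t \<le> m \<Longrightarrow> m \<le> n \<Longrightarrow> 0 < incl_prob n m t"
  by (simp add: incl_prob_def)

lemma incl_prob_small:
  assumes "m \<le> n"
  shows "incl_prob n m 0 = 1"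
    and "incl_prob n m 1 = real m / real n"
    and "incl_prob n m 2 = real m / real n * ((real m - 1) / (real n - 1))"
    and "incl_prob n m 3 = real m / real n * ((real m - 1) / (real n - 1)) * ((real m - 2) / (real n - 2))"
  using assms by (simp_all add: incl_prob_eq_prod numeral_eq_Suc lessThan_Suc mult_ac)

lemma card_subsets_containing:
  assumes "finite A" "T \<subseteq> A" "card T \<le> m"
  shows "card {S. S \<subseteq> A \<and> card S = m \<and> T \<subseteq> S} = (card A - card T) choose (m - card T)"
proof -
  let ?S = "{S. S \<subseteq> A \<and> card S = m \<and> T \<subseteq> S}" and ?U = "{U. U \<subseteq> A - T \<and> card U = m - card T}"
  have "finite T" using assms finite_subset by blast
  have "bij_betw (\<lambda>U. U \<union> T) ?U ?S"
  proof (rule bij_betw_byWitness[where f' = "\<lambda>S. S - T"])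
    show "(\<lambda>U. U \<union> T) ` ?U \<subseteq> ?S"
    proof clarify
      fix U assume "U \<subseteq> A - T" "card U = m - card T"
      moreover from this have "card (U \<union> T) = card U + card T"
        using assms(1) \<open>finite T\<close> by (intro card_Un_disjoint) (auto dest: finite_subset)
      ultimately show "U \<union> T \<subseteq> A \<and> card (U \<union> T) = m \<and> T \<subseteq> U \<union> T"
        using assms by auto
    qed
    show "(\<lambda>S. S - T) ` ?S \<subseteq> ?U"
      using \<open>finite T\<close> by (auto simp: card_Diff_subset)
  qed auto
  then have "card ?S = card (A - T) choose (m - card T)"
    using assms(1) by (simp add: bij_betw_same_card[symmetric] n_subsets)
  with assms \<open>finite T\<close> show ?thesis by (simp add: card_Diff_subset)
qed

lemma prob_contains_pmf_of_subsets:
  assumes "finite A" "T \<subseteq> A" "m \<le> card A"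
  shows "measure (pmf_of_set {S. S \<subseteq> A \<and> card S = m}) {S. T \<subseteq> S} = incl_prob (card A) m (card T)"
proof -
  let ?F = "{S. S \<subseteq> A \<and> card S = m}"
  have "finite ?F" using assms(1) by simp
  moreover have "card ?F = card A choose m" using assms(1) by (rule n_subsets)
  moreover then have "?F \<noteq> {}" using assms(3) by (metis card.empty binomial_eq_0_iff not_less)
  ultimately have prob: "measure (pmf_of_set ?F) {S. T \<subseteq> S}
      = real (card {S. S \<subseteq> A \<and> card S = m \<and> T \<subseteq> S}) / real (card A choose m)"
    by (simp add: measure_pmf_of_set Int_def conj_assoc)
  show ?thesis
  proof (cases "card T \<le> m")
    case True
    have "real (card A choose m) * real (m choose card T)
        = real (card A choose card T) * real ((card A - card T) choose (m - card T))"
      using choose_mult[OF True assms(3)] by (metis of_nat_mult)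
    with True assms show ?thesis
      unfolding prob card_subsets_containing[OF assms(1,2) True] incl_prob_def
      by (simp add: field_simps)
  next
    case False
    then have no_superset: "{S. S \<subseteq> A \<and> card S = m \<and> T \<subseteq> S} = {}"
      using assms(1) by (auto dest: card_mono[OF finite_subset])
    show ?thesis unfolding prob no_superset incl_prob_def using False by simp
  qed
qed

lemma qprob_nonneg: "0 \<le> qprob d w i"
  by (simp add: qprob_def sum_nonneg)

lemma sum_qprob:
  assumes "\<exists>i\<in>{1..d}. w i \<noteq> 0"
  shows "(\<Sum>i\<in>{1..d}. qprob d w i) = 1"
proof -
  have "(\<Sum>j\<in>{1..d}. \<bar>w j\<bar>) \<noteq> 0"
    using assms by (subst sum_nonneg_eq_0_iff) auto
  then show ?thesis by (simp add: qprob_def sum_divide_distrib[symmetric])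
qed

lemma sum_qprob_le_one:
  assumes "\<exists>i\<in>{1..d}. w i \<noteq> 0" "T \<subseteq> {1..d}"
  shows "sum (qprob d w) T \<le> 1"
proof -
  have "sum (qprob d w) T \<le> (\<Sum>i\<in>{1..d}. qprob d w i)"
    using assms(2) by (intro sum_mono2) (auto simp: qprob_nonneg)
  with sum_qprob[OF assms(1)] show ?thesis by simp
qed

lemma
  assumes "\<exists>i\<in>{1..d}. w i \<noteq> 0"
  shows pmf_embed_qprob: "pmf (embed_pmf (qprob d w)) i = qprob d w i"
    and set_pmf_embed_qprob: "set_pmf (embed_pmf (qprob d w)) \<subseteq> {1..d}"
proof -
  have "(\<integral>\<^sup>+i. ennreal (qprob d w i) \<partial>count_space UNIV) = (\<Sum>i\<in>{1..d}. ennreal (qprob d w i))"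
    by (rule nn_integral_count_space') (auto simp: qprob_def)
  also have "\<dots> = 1"
    using sum_qprob[OF assms] by (simp add: sum_ennreal qprob_nonneg)
  finally have total: "(\<integral>\<^sup>+i. ennreal (qprob d w i) \<partial>count_space UNIV) = 1" .
  show "pmf (embed_pmf (qprob d w)) i = qprob d w i"
    using total by (intro pmf_embed_pmf) (auto simp: qprob_nonneg)
  have "set_pmf (embed_pmf (qprob d w)) = {i. qprob d w i \<noteq> 0}"
    using total by (intro set_embed_pmf) (auto simp: qprob_nonneg)
  then show "set_pmf (embed_pmf (qprob d w)) \<subseteq> {1..d}"
    by (auto simp: qprob_def split: if_splits)
qed

lemma measure_bind_pmf_finite_support:
  assumes "finite A" "set_pmf M \<subseteq> A"
  shows "measure (bind_pmf M N) X = (\<Sum>a\<in>A. pmf M a * measure (N a) X)"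
proof -
  have "emeasure (bind_pmf M N) X = (\<integral>\<^sup>+a. emeasure (N a) X \<partial>M)" by simp
  also have "\<dots> = (\<Sum>a\<in>A. emeasure (N a) X * pmf M a)"
    using assms by (intro nn_integral_measure_pmf_support) auto
  also have "\<dots> = ennreal (\<Sum>a\<in>A. pmf M a * measure (N a) X)"
    by (simp add: measure_pmf.emeasure_eq_measure ennreal_mult'' sum_ennreal[symmetric] mult.commute)
  finally show ?thesis
    by (simp add: measure_pmf.emeasure_eq_measure sum_nonneg)
qed

lemma prob_contains_sampling:
  assumes "k \<le> d" "\<exists>i\<in>{1..d}. w i \<noteq> 0" "T \<subseteq> {1..d}"
  shows "measure (sampling k d w) {B. T \<subseteq> B}
    = sum (qprob d w) T * incl_prob (d - 1) (k - 1) (card T - 1)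
      + (1 - sum (qprob d w) T) * incl_prob (d - 1) (k - 1) (card T)"
proof -
  let ?q = "qprob d w" and ?\<rho> = "incl_prob (d - 1) (k - 1)"
  have "measure (sampling k d w) {B. T \<subseteq> B} = (\<Sum>l\<in>{1..d}. ?q l * ?\<rho> (card (T - {l})))"
    unfolding sampling_def
      measure_bind_pmf_finite_support[OF finite_atLeastAtMost set_pmf_embed_qprob[OF assms(2)]]
  proof (intro sum.cong refl)
    fix l assume "l \<in> {1..d}"
    then have "measure (pmf_of_set {S. S \<subseteq> {1..d} - {l} \<and> card S = k - 1}) {S. T - {l} \<subseteq> S}
        = ?\<rho> (card (T - {l}))"
      using assms by (subst prob_contains_pmf_of_subsets) auto
    moreover have "insert l -` {B. T \<subseteq> B} = {S. T - {l} \<subseteq> S}" by auto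
    ultimately show "pmf (embed_pmf ?q) l
        * measure (map_pmf (insert l) (pmf_of_set {S. S \<subseteq> {1..d} - {l} \<and> card S = k - 1}))
            {B. T \<subseteq> B}
      = ?q l * ?\<rho> (card (T - {l}))"
      by (simp add: pmf_embed_qprob[OF assms(2)])
  qed
  also have "\<dots> = (\<Sum>l\<in>T. ?q l * ?\<rho> (card (T - {l})))
      + (\<Sum>l\<in>{1..d} - T. ?q l * ?\<rho> (card (T - {l})))"
    using assms(3) by (simp add: sum.subset_diff)
  also have "\<dots> = sum ?q T * ?\<rho> (card T - 1) + (\<Sum>l\<in>{1..d} - T. ?q l) * ?\<rho> (card T)"
    using finite_subset[OF assms(3)] by (simp add: sum_distrib_right)
  also have "(\<Sum>l\<in>{1..d} - T. ?q l) = 1 - sum ?q T"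
    using assms(3) sum_qprob[OF assms(2)] by (simp add: sum_diff)
  finally show ?thesis .
qed

lemma prob_contains_sampling_pos:
  assumes "k \<le> d" "\<exists>i\<in>{1..d}. w i \<noteq> 0" "T \<subseteq> {1..d}" "card T < k"
  shows "0 < measure (sampling k d w) {B. T \<subseteq> B}"
proof -
  let ?q = "sum (qprob d w) T" and ?\<rho> = "incl_prob (d - 1) (k - 1)"
  have "0 < ?\<rho> (card T - 1)" "0 < ?\<rho> (card T)"
    using assms(1,4) by (auto intro: incl_prob_pos)
  moreover have "0 \<le> ?q" "?q \<le> 1"
    using sum_qprob_le_one[OF assms(2,3)] by (auto intro: sum_nonneg qprob_nonneg)
  ultimately have "0 < ?q * ?\<rho> (card T - 1) + (1 - ?q) * ?\<rho> (card T)"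
    by (cases "?q = 1") (auto intro: add_nonneg_pos add_pos_nonneg)
  then show ?thesis using prob_contains_sampling[OF assms(1-3)] by simp
qed

lemma prob_mem_sampling:
  assumes "1 \<le> k" "k \<le> d" "2 \<le> d" "\<exists>i\<in>{1..d}. w i \<noteq> 0" "i \<in> {1..d}"
  shows "measure (sampling k d w) {B. i \<in> B}
    = (real d - real k) / (real d - 1) * qprob d w i + (real k - 1) / (real d - 1)"
proof -
  let ?q = "qprob d w i" and ?\<rho> = "incl_prob (d - 1) (k - 1)"
  have "measure (sampling k d w) {B. i \<in> B} = ?q * ?\<rho> 0 + (1 - ?q) * ?\<rho> 1"
    using assms prob_contains_sampling[of k d w "{i}"] by simp
  also have "\<dots> = ?q + (1 - ?q) * ((real k - 1) / (real d - 1))"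
    using assms(1,2) by (simp only: incl_prob_small diff_le_mono) (simp add: of_nat_diff)
  also have "\<dots> = (real d - real k) / (real d - 1) * ?q + (real k - 1) / (real d - 1)"
  proof -
    have "q + (1 - q) * (K / D) = (D - K) / D * q + K / D" if "D \<noteq> 0" for D K q :: real
      using that by (simp add: field_simps)
    from this[where D = "real d - 1" and K = "real k - 1" and q = ?q] show ?thesis using assms(3) by simp
  qed
  finally show ?thesis .
qed

lemma prob_pair_mem_sampling:
  assumes "3 \<le> k" "k \<le> d" "\<exists>i\<in>{1..d}. w i \<noteq> 0" "i \<in> {1..d}" "j \<in> {1..d}" "i \<noteq> j"
  shows "measure (sampling k d w) {B. i \<in> B \<and> j \<in> B}
    = 1 / gdk d k + (real d - real k) / ((real k - 2) * gdk d k) * (qprob d w i + qprob d w j)"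
proof -
  let ?q = "qprob d w i + qprob d w j" and ?\<rho> = "incl_prob (d - 1) (k - 1)"
  have "measure (sampling k d w) {B. i \<in> B \<and> j \<in> B} = ?q * ?\<rho> 1 + (1 - ?q) * ?\<rho> 2"
    using assms prob_contains_sampling[of k d w "{i, j}"] by (simp add: numeral_2_eq_2)
  also have "\<dots> = ?q * ((real k - 1) / (real d - 1))
      + (1 - ?q) * ((real k - 1) / (real d - 1) * ((real k - 2) / (real d - 2)))"
    using assms(1,2) by (simp only: incl_prob_small diff_le_mono) (simp add: of_nat_diff)
  also have "\<dots> = 1 / gdk d k + (real d - real k) / ((real k - 2) * gdk d k) * ?q"
  proof -
    have "q * (K / D) + (1 - q) * (K / D * (L / E))
        = 1 / (D * E / (K * L)) + (E - L) / (L * (D * E / (K * L))) * q"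
      if "D \<noteq> 0" "E \<noteq> 0" "K \<noteq> 0" "L \<noteq> 0" for D E K L q :: real
      using that by (simp add: field_simps)
    from this[where D = "real d - 1" and E = "real d - 2" and K = "real k - 1" and L = "real k - 2"
        and q = ?q] show ?thesis
      using assms(1,2) by (simp add: gdk_def)
  qed
  finally show ?thesis .
qed

lemma prob_triple_mem_sampling:
  assumes "3 \<le> k" "k \<le> d" "4 \<le> d" "\<exists>i\<in>{1..d}. w i \<noteq> 0"
    and "i \<in> {1..d}" "j \<in> {1..d}" "r \<in> {1..d}" "i \<noteq> j" "i \<noteq> r" "j \<noteq> r"
  shows "measure (sampling k d w) {B. i \<in> B \<and> j \<in> B \<and> r \<in> B}
    = 1 / gdk d k * ((real k - 3) / (real d - 3))
      + 1 / gdk d k * ((real d - real k) / (real d - 3)) * (qprob d w i + qprob d w j + qprob d w r)"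
proof -
  let ?q = "qprob d w i + qprob d w j + qprob d w r" and ?\<rho> = "incl_prob (d - 1) (k - 1)"
  have "measure (sampling k d w) {B. i \<in> B \<and> j \<in> B \<and> r \<in> B} = ?q * ?\<rho> 2 + (1 - ?q) * ?\<rho> 3"
    using assms prob_contains_sampling[of k d w "{i, j, r}"]
    by (simp add: add.assoc numeral_2_eq_2 numeral_3_eq_3)
  also have "\<dots> = ?q * ((real k - 1) / (real d - 1) * ((real k - 2) / (real d - 2)))
      + (1 - ?q) * ((real k - 1) / (real d - 1) * ((real k - 2) / (real d - 2))
          * ((real k - 3) / (real d - 3)))"
    using assms(1,2) by (simp only: incl_prob_small diff_le_mono) (simp add: of_nat_diff)
  also have "\<dots> = 1 / gdk d k * ((real k - 3) / (real d - 3))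
      + 1 / gdk d k * ((real d - real k) / (real d - 3)) * ?q"
  proof -
    have "q * (K / D * (L / E)) + (1 - q) * (K / D * (L / E) * (M / F))
        = 1 / (D * E / (K * L)) * (M / F) + 1 / (D * E / (K * L)) * ((F - M) / F) * q"
      if "D \<noteq> 0" "E \<noteq> 0" "F \<noteq> 0" "K \<noteq> 0" "L \<noteq> 0" for D E F K L M q :: real
      using that by (simp add: field_simps)
    from this[where D = "real d - 1" and E = "real d - 2" and F = "real d - 3"
        and K = "real k - 1" and L = "real k - 2" and M = "real k - 3" and q = ?q] show ?thesis
      using assms(1-3) by (simp add: gdk_def)
  qed
  finally show ?thesis .
qed

lemma expectation_xhat:
  fixes P :: "nat set pmf"
  assumes "measure P {C. i \<in> C} \<noteq> 0"
  shows "measure_pmf.expectation P (\<lambda>B. xhat P x B i) = x i"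
proof -
  have "(\<lambda>B. xhat P x B i) = (\<lambda>B. indicator {C. i \<in> C} B * (x i / measure P {C. i \<in> C}))"
    by (simp add: xhat_def fun_eq_iff)
  then show ?thesis using assms by simp
qed

lemma expectation_hmat:
  fixes P :: "nat set pmf"
  assumes "measure P {C. i \<in> C \<and> j \<in> C} \<noteq> 0"
  shows "measure_pmf.expectation P (\<lambda>B. hmat P x B i j) = x i * x j"
proof (cases "i = j")
  case True
  then have "(\<lambda>B. hmat P x B i j) = (\<lambda>B. indicator {C. i \<in> C} B * (x i * x j / measure P {C. i \<in> C}))"
    by (simp add: hmat_def fun_eq_iff power2_eq_square)
  with True assms show ?thesis by simp
next
  case False
  then have "(\<lambda>B. hmat P x B i j)
      = (\<lambda>B. indicator {C. i \<in> C \<and> j \<in> C} B * (x i * x j / measure P {C. i \<in> C \<and> j \<in> C}))"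
    by (simp add: hmat_def fun_eq_iff)
  then show ?thesis using assms by simp
qed

theorem lemma9:
  fixes k d :: nat and w x :: "nat \<Rightarrow> real"
  assumes "3 \<le> k" and "k + 3 \<le> d"
    and "\<exists>i\<in>{1..d}. w i \<noteq> 0"
  defines "P \<equiv> sampling k d w"
  shows
    "(\<forall>i\<in>{1..d}. measure_pmf.prob P {B. i \<in> B}
        = (real d - real k) / (real d - 1) * qprob d w i + (real k - 1) / (real d - 1))
     \<and> (\<forall>i\<in>{1..d}. \<forall>j\<in>{1..d}. i \<noteq> j \<longrightarrow>
        measure_pmf.prob P {B. i \<in> B \<and> j \<in> B}
        = 1 / gdk d k + (real d - real k) / ((real k - 2) * gdk d k) * (qprob d w i + qprob d w j))
     \<and> (\<forall>i\<in>{1..d}. \<forall>j\<in>{1..d}. \<forall>r\<in>{1..d}. i \<noteq> j \<and> i \<noteq> r \<and> j \<noteq> r \<longrightarrow>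
        measure_pmf.prob P {B. i \<in> B \<and> j \<in> B \<and> r \<in> B}
        = 1 / gdk d k * ((real k - 3) / (real d - 3))
          + 1 / gdk d k * ((real d - real k) / (real d - 3)) * (qprob d w i + qprob d w j + qprob d w r))
     \<and> (\<forall>i\<in>{1..d}. measure_pmf.expectation P (\<lambda>B. xhat P x B i) = x i)
     \<and> (\<forall>i\<in>{1..d}. \<forall>j\<in>{1..d}. measure_pmf.expectation P (\<lambda>B. hmat P x B i j) = x i * x j)"
proof -
  have "k \<le> d" "4 \<le> d" using assms(1,2) by simp_all
  have pair_pos: "measure (sampling k d w) {B. i \<in> B \<and> j \<in> B} \<noteq> 0"
    if "i \<in> {1..d}" "j \<in> {1..d}" for i j
  proof -
    have "card {i, j} < k" using assms(1) by (simp add: card_insert_if)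
    then have "0 < measure (sampling k d w) {B. {i, j} \<subseteq> B}"
      using that assms(3) \<open>k \<le> d\<close> by (intro prob_contains_sampling_pos) auto
    then show ?thesis by simp
  qed
  have single_pos: "measure (sampling k d w) {B. i \<in> B} \<noteq> 0" if "i \<in> {1..d}" for i
    using pair_pos[OF that that] by simp
  show ?thesis
    unfolding P_def using assms(1,3) \<open>k \<le> d\<close> \<open>4 \<le> d\<close>
    by (intro conjI ballI impI expectation_xhat expectation_hmat single_pos pair_pos
        prob_mem_sampling prob_pair_mem_sampling prob_triple_mem_sampling) auto
qed

end
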